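(* For $0\le\alpha<1$ and $r\ge1$, put $P(r)=r^8-2\alpha^4(r^4-1)-1$. Then $P(1)=0$, $P(r)>0$ for $r>1$, and $1$ is the largest real root of $P$ and satisfies $1>\alpha$. Define $t(r)=\int_1^r \frac{s^2\sqrt{s^4-\alpha^4}}{\sqrt{P(s)}}\,ds$, and as functions of $t\ge0$ set $A_1=-\frac{\sqrt{P(r)}}{r\sqrt{r^4-\alpha^4}}$, $A_2=r$, $A_3=-r$, $B=\sqrt{r^2+\alpha^2}$, $C=\sqrt{r^2-\alpha^2}$. Then $(A_1,A_2,A_3,B,C)$ solves on $t>0$ the system $$ \begin{aligned} A_1'&=\tfrac{(A_2-A_3)^2-A_1^2}{A_2A_3}+\tfrac{A_1^2(B^2+C^2)}{B^2C^2},\quad A_2'=\tfrac{A_1^2-A_2^2+A_3^2}{A_1A_3}-\tfrac{B^2+C^2-2A_2^2}{BC},\quad A_3'=\tfrac{A_1^2+A_2^2-A_3^2}{A_1A_2}-\tfrac{B^2+C^2-2A_3^2}{BC},\\ B'&=-\tfrac{CA_1+BA_2+BA_3}{BC}-\tfrac{(C^2-B^2)(A_2+A_3)}{2A_2A_3C},\quad C'=-\tfrac{BA_1+CA_2+CA_3}{BC}-\tfrac{(B^2-C^2)(A_2+A_3)}{2A_2A_3B}, \end{aligned} $$ these functions extend smoothly to $t\in[0,\infty)$, and they satisfy: $A_1(0)=0$, $|A_1'(0)|=4$; $A_2(0)=-A_3(0)\neq0$, $A_2'(0)=A_3'(0)$; $B(0)\ne0$, $B'(0)=0$; $C(0)\neq0$,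 $C'(0)=0$; and each function has constant sign on $(0,\infty)$.
   Context: Primes denote $d/dt$. These are the smoothness conditions at the zero section for a metric $dt^2+A_1^2\eta_1^2+A_2^2\eta_2^2+A_3^2\eta_3^2+B^2(\eta_4^2+\eta_5^2)+C^2(\eta_6^2+\eta_7^2)$ to extend over the complex line bundle obtained by collapsing the circle generated by the first characteristic field of a $3$-Sasakian $7$-manifold. *)

theory Defs
  imports "HOL-Analysis.Analysis"
begin

definition Pfun :: "real \<Rightarrow> real \<Rightarrow> real" where
  "Pfun \<alpha> r = r ^ 8 - 2 * \<alpha> ^ 4 * (r ^ 4 - 1) - 1"

definition tfun :: "real \<Rightarrow> real \<Rightarrow> real" where
  "tfun \<alpha> r = integral {1..r} (\<lambda>s. s ^ 2 * sqrt (s ^ 4 - \<alpha> ^ 4) / sqrt (Pfun \<alpha> s))"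

definition rfun :: "real \<Rightarrow> real \<Rightarrow> real" where
  "rfun \<alpha> t = (THE r. 1 \<le> r \<and> tfun \<alpha> r = t)"

definition A1f :: "real \<Rightarrow> real \<Rightarrow> real" where
  "A1f \<alpha> t = - sqrt (Pfun \<alpha> (rfun \<alpha> t)) / (rfun \<alpha> t * sqrt (rfun \<alpha> t ^ 4 - \<alpha> ^ 4))"

definition A2f :: "real \<Rightarrow> real \<Rightarrow> real" where
  "A2f \<alpha> t = rfun \<alpha> t"

definition A3f :: "real \<Rightarrow> real \<Rightarrow> real" where
  "A3f \<alpha> t = - rfun \<alpha> t"

definition Bf :: "real \<Rightarrow> real \<Rightarrow> real" where
  "Bf \<alpha> t = sqrt (rfun \<alpha> t ^ 2 + \<alpha> ^ 2)"

definition Cf :: "real \<Rightarrow> real \<Rightarrow> real" where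
  "Cf \<alpha> t = sqrt (rfun \<alpha> t ^ 2 - \<alpha> ^ 2)"

definition smooth_on :: "real set \<Rightarrow> (real \<Rightarrow> real) \<Rightarrow> bool" where
  "smooth_on U f \<longleftrightarrow> (\<forall>n. ((deriv ^^ n) f) differentiable_on U)"

definition extends_smoothly_nonneg :: "(real \<Rightarrow> real) \<Rightarrow> bool" where
  "extends_smoothly_nonneg f \<longleftrightarrow>
     (\<exists>g U. open U \<and> {0..} \<subseteq> U \<and> smooth_on U g \<and> (\<forall>t\<ge>0. g t = f t))"

definition const_sign_pos :: "(real \<Rightarrow> real) \<Rightarrow> bool" where
  "const_sign_pos f \<longleftrightarrow> (\<forall>t>0. f t > 0) \<or> (\<forall>t>0. f t < 0)"

end

theory Submission
  imports Defs
begin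

text \<open>
  Write \<open>P(r) = (r - 1) Q(r)\<close> with \<open>Q > 0\<close> on \<open>[1,\<infinity>)\<close> and substitute
  \<open>r = 1 + v\<^sup>2\<close>.  Then \<open>t(r) = T(\<surd>(r - 1))\<close>, where \<open>T(v) = \<integral>\<^sub>0\<^sup>v H\<close> for a function \<open>H\<close> that is
  smooth on the whole real line and bounded below by \<open>1/2\<close>.  Hence \<open>T\<close> is a diffeomorphism
  of \<open>\<real>\<close>, and on \<open>t \<ge> 0\<close> the solution \<open>r(t)\<close> equals \<open>R(t) = 1 + T\<^sup>-\<^sup>1(t)\<^sup>2\<close>, which is smooth
  on all of \<open>\<real>\<close> and stationary at \<open>t = 0\<close>.  Moreover \<open>\<surd>P(R) = T\<^sup>-\<^sup>1 \<cdot> \<surd>Q(R)\<close>, so all five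
  functions are smooth expressions in \<open>T\<^sup>-\<^sup>1\<close> and \<open>R\<close>; this yields the smooth extensions and
  the values and derivatives at \<open>t = 0\<close>.  For \<open>t > 0\<close>, \<open>dr/dt = 1/(integrand)\<close> and the
  system reduces by the chain rule to algebraic identities in \<open>r\<close>, \<open>\<surd>P(r)\<close>, \<open>\<surd>(r\<^sup>4 - \<alpha>\<^sup>4)\<close>.
\<close>

lemma DERIV_sqrt_comp:
  assumes "(g has_real_derivative g') (at x)" and "0 < g x"
  shows "((\<lambda>x. sqrt (g x)) has_real_derivative g' / (2 * sqrt (g x))) (at x)"
  using DERIV_chain2[OF DERIV_real_sqrt[OF assms(2)] assms(1)] by (simp add: field_simps)

lemma DERIV_within_nonneg_transfer:
  assumes "(g has_real_derivative d) (at 0)" and "\<And>t. 0 \<le> t \<Longrightarrow> g t = f t"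
  shows "(f has_real_derivative d) (at 0 within {0..})"
  by (rule has_field_derivative_transform_within[OF has_field_derivative_at_within[OF assms(1)], of 1])
     (use assms(2) in auto)

section \<open>Functions that are smooth on the whole real line\<close>

text \<open>\<open>Cinf f\<close>: \<open>f\<close> has a derivative everywhere and that derivative is again \<open>Cinf\<close>.
  The coinductive reading gives derivatives of every order.\<close>
coinductive Cinf :: "(real \<Rightarrow> real) \<Rightarrow> bool" where
  Cinf_intro: "(\<And>x. (f has_real_derivative f' x) (at x)) \<Longrightarrow> Cinf f' \<Longrightarrow> Cinf f"

lemma Cinf_D: "Cinf f \<Longrightarrow> \<exists>f'. (\<forall>x. (f has_real_derivative f' x) (at x)) \<and> Cinf f'"
  by (erule Cinf.cases) blast

inductive_set alg_closure :: "(real \<Rightarrow> real) set \<Rightarrow> (real \<Rightarrow> real) set" for S where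
  alg_base: "f \<in> S \<Longrightarrow> f \<in> alg_closure S"
| alg_const: "(\<lambda>x. c) \<in> alg_closure S"
| alg_add: "f \<in> alg_closure S \<Longrightarrow> g \<in> alg_closure S \<Longrightarrow> (\<lambda>x. f x + g x) \<in> alg_closure S"
| alg_mult: "f \<in> alg_closure S \<Longrightarrow> g \<in> alg_closure S \<Longrightarrow> (\<lambda>x. f x * g x) \<in> alg_closure S"

definition deriv_closed :: "(real \<Rightarrow> real) set \<Rightarrow> bool" where
  "deriv_closed S \<longleftrightarrow>
     (\<forall>h\<in>S. \<exists>h'. (\<forall>x. (h has_real_derivative h' x) (at x)) \<and> h' \<in> alg_closure S)"

text \<open>By the sum and product rules the whole generated algebra is then closed under
  differentiation \<dots>\<close>
lemma alg_closure_deriv: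
  assumes "deriv_closed S" and "f \<in> alg_closure S"
  shows "\<exists>f'. (\<forall>x. (f has_real_derivative f' x) (at x)) \<and> f' \<in> alg_closure S"
  using assms(2)
proof induction
  case (alg_base f)
  then show ?case using assms(1) unfolding deriv_closed_def by blast
next
  case (alg_const c)
  show ?case by (intro exI[of _ "\<lambda>x. 0"]) (auto intro: alg_closure.intros)
next
  case (alg_add f g)
  then obtain f' g' where "\<forall>x. (f has_real_derivative f' x) (at x)" "f' \<in> alg_closure S"
    "\<forall>x. (g has_real_derivative g' x) (at x)" "g' \<in> alg_closure S" by blast
  then show ?case
    by (intro exI[of _ "\<lambda>x. f' x + g' x"]) (auto intro: alg_closure.intros derivative_intros)
next
  case (alg_mult f g)
  then obtain f' g' where f': "\<forall>x. (f has_real_derivative f' x) (at x)" "f' \<in> alg_closure S"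
    and g': "\<forall>x. (g has_real_derivative g' x) (at x)" "g' \<in> alg_closure S" by blast
  define d where "d x = f' x * g x + f x * g' x" for x
  have "((\<lambda>x. f x * g x) has_real_derivative d x) (at x)" for x
    unfolding d_def using f'(1) g'(1) by (auto intro!: derivative_eq_intros)
  moreover have "d \<in> alg_closure S"
    unfolding d_def using alg_mult.hyps f'(2) g'(2)
    by (intro alg_closure.alg_add alg_closure.alg_mult)
  ultimately show ?case by blast
qed

text \<open>\<dots> so every member of the generated algebra is smooth (by coinduction).  This is the
  single principle from which all closure properties of \<open>Cinf\<close> below are derived.\<close>
lemma alg_closure_Cinf:
  assumes "deriv_closed S" and "f \<in> alg_closure S"
  shows "Cinf f"
  using assms(2)
proof (coinduction arbitrary: f rule: Cinf.coinduct)
  case (Cinf f)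
  then show ?case using alg_closure_deriv[OF assms(1)] by blast
qed

lemma Cinf_deriv_in_closure:
  "Cinf h \<Longrightarrow> Collect Cinf \<subseteq> S \<Longrightarrow>
     \<exists>h'. (\<forall>x. (h has_real_derivative h' x) (at x)) \<and> h' \<in> alg_closure S"
  by (blast dest: Cinf_D intro: alg_base)

lemma deriv_closed_extend:
  assumes "\<And>h. h \<in> F \<Longrightarrow>
    \<exists>h'. (\<forall>x. (h has_real_derivative h' x) (at x)) \<and> h' \<in> alg_closure (F \<union> Collect Cinf)"
  shows "deriv_closed (F \<union> Collect Cinf)"
  unfolding deriv_closed_def using assms Cinf_deriv_in_closure by blast

lemma deriv_closed_Cinf: "deriv_closed (Collect Cinf)"
  unfolding deriv_closed_def using Cinf_deriv_in_closure by blast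

lemma Cinf_const: "Cinf (\<lambda>x. c)"
  by (rule alg_closure_Cinf[OF deriv_closed_Cinf alg_const])

lemma Cinf_add: "Cinf f \<Longrightarrow> Cinf g \<Longrightarrow> Cinf (\<lambda>x. f x + g x)"
  by (rule alg_closure_Cinf[OF deriv_closed_Cinf]) (auto intro: alg_closure.intros)

lemma Cinf_mult: "Cinf f \<Longrightarrow> Cinf g \<Longrightarrow> Cinf (\<lambda>x. f x * g x)"
  by (rule alg_closure_Cinf[OF deriv_closed_Cinf]) (auto intro: alg_closure.intros)

lemma Cinf_id: "Cinf (\<lambda>x. x)"
proof -
  have "deriv_closed {\<lambda>x. x}"
    unfolding deriv_closed_def by (auto intro!: exI[of _ "\<lambda>x. 1"] alg_const)
  then show ?thesis by (rule alg_closure_Cinf) (auto intro: alg_base)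
qed

lemma Cinf_minus: "Cinf f \<Longrightarrow> Cinf (\<lambda>x. - f x)"
  using Cinf_mult[OF Cinf_const[of "-1"]] by simp

lemma Cinf_diff: "Cinf f \<Longrightarrow> Cinf g \<Longrightarrow> Cinf (\<lambda>x. f x - g x)"
  using Cinf_add[OF _ Cinf_minus] by simp

lemma Cinf_power: "Cinf f \<Longrightarrow> Cinf (\<lambda>x. f x ^ n)"
  by (induction n) (auto intro: Cinf_const Cinf_mult)

lemma Cinf_inverse:
  assumes f: "Cinf f" and nz: "\<And>x. f x \<noteq> 0"
  shows "Cinf (\<lambda>x. inverse (f x))"
proof -
  obtain f' where f': "\<forall>x. (f has_real_derivative f' x) (at x)" "Cinf f'"
    using Cinf_D[OF f] by blast
  define d where "d x = (- 1 * f' x) * (inverse (f x) * inverse (f x))" for x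
  have "((\<lambda>x. inverse (f x)) has_real_derivative d x) (at x)" for x
    unfolding d_def
    by (rule DERIV_cong[OF DERIV_inverse_fun[OF f'(1)[rule_format] nz]])
       (simp add: power2_eq_square inverse_mult_distrib)
  moreover have "d \<in> alg_closure ({\<lambda>x. inverse (f x)} \<union> Collect Cinf)"
    unfolding d_def using f'(2) by (intro alg_mult alg_base alg_const) auto
  ultimately have "deriv_closed ({\<lambda>x. inverse (f x)} \<union> Collect Cinf)"
    by (intro deriv_closed_extend) auto
  then show ?thesis by (rule alg_closure_Cinf) (auto intro: alg_base)
qed

lemma Cinf_divide: "Cinf f \<Longrightarrow> Cinf g \<Longrightarrow> (\<And>x. g x \<noteq> 0) \<Longrightarrow> Cinf (\<lambda>x. f x / g x)"
  using Cinf_mult[OF _ Cinf_inverse] by (simp add: divide_inverse)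

text \<open>Square root of a positive smooth function; the family must contain both \<open>\<surd>f\<close> and
  \<open>1/\<surd>f\<close>, as each one's derivative involves the other.\<close>
lemma Cinf_sqrt:
  assumes f: "Cinf f" and pos: "\<And>x. f x > 0"
  shows "Cinf (\<lambda>x. sqrt (f x))"
proof -
  let ?S = "{\<lambda>x. sqrt (f x), \<lambda>x. inverse (sqrt (f x))} \<union> Collect Cinf"
  obtain f' where f': "\<forall>x. (f has_real_derivative f' x) (at x)" "Cinf f'"
    using Cinf_D[OF f] by blast
  define ds where "ds x = (1/2) * f' x * inverse (sqrt (f x))" for x
  have d_sqrt: "((\<lambda>x. sqrt (f x)) has_real_derivative ds x) (at x)" for x
    unfolding ds_def
    by (rule DERIV_cong[OF DERIV_chain2[OF DERIV_real_sqrt[OF pos] f'(1)[rule_format]]])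
       (simp add: field_simps)
  define d_inv where "d_inv x = (- 1 * ds x) * (inverse (sqrt (f x)) * inverse (sqrt (f x)))"
    for x
  have "((\<lambda>x. inverse (sqrt (f x))) has_real_derivative d_inv x) (at x)" for x
    unfolding d_inv_def using pos[of x]
    by (intro DERIV_cong[OF DERIV_inverse_fun[OF d_sqrt]])
       (auto simp: power2_eq_square simp flip: inverse_mult_distrib)
  moreover have ds_alg: "ds \<in> alg_closure ?S"
    unfolding ds_def using f'(2) by (intro alg_mult alg_base alg_const) auto
  moreover have "d_inv \<in> alg_closure ?S"
    unfolding d_inv_def by (intro alg_mult alg_const ds_alg) (auto intro: alg_base)
  ultimately have "deriv_closed ?S"
    using d_sqrt by (intro deriv_closed_extend) auto
  then show ?thesis by (rule alg_closure_Cinf) (auto intro: alg_base)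
qed

text \<open>A function solving \<open>G' = 1 / H(G)\<close> for a smooth nowhere-vanishing \<open>H\<close> is smooth:
  all derivatives of \<open>w \<circ> G\<close>, \<open>w\<close> smooth, stay in the algebra generated by such
  compositions.  This covers inverses of functions with smooth nonvanishing derivative.\<close>
lemma Cinf_ode_inverse:
  assumes H: "Cinf H" and H_nz: "\<And>x. H x \<noteq> 0"
    and G': "\<And>x. (G has_real_derivative inverse (H (G x))) (at x)"
  shows "Cinf G"
proof -
  let ?S = "{v. \<exists>w. Cinf w \<and> v = (\<lambda>x. w (G x))}"
  have inv_H: "Cinf (\<lambda>x. inverse (H x))" by (rule Cinf_inverse[OF H H_nz])
  have "deriv_closed ?S" unfolding deriv_closed_def
  proof
    fix h assume "h \<in> ?S"
    then obtain w where w: "Cinf w" "h = (\<lambda>x. w (G x))" by blast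
    obtain w' where w': "\<forall>x. (w has_real_derivative w' x) (at x)" "Cinf w'"
      using Cinf_D[OF w(1)] by blast
    define d where "d x = w' (G x) * inverse (H (G x))" for x
    have "(h has_real_derivative d x) (at x)" for x
      using DERIV_chain2[OF w'(1)[rule_format] G'] w(2) by (simp add: d_def)
    moreover have "d \<in> alg_closure ?S"
      unfolding d_def using w'(2) inv_H by (intro alg_mult alg_base) auto
    ultimately show "\<exists>h'. (\<forall>x. (h has_real_derivative h' x) (at x)) \<and> h' \<in> alg_closure ?S"
      by blast
  qed
  moreover have "G \<in> alg_closure ?S" using Cinf_id by (auto intro!: alg_base)
  ultimately show ?thesis by (rule alg_closure_Cinf)
qed

lemma Cinf_continuous_on: "Cinf f \<Longrightarrow> continuous_on S f"
  by (meson Cinf_D DERIV_isCont continuous_at_imp_continuous_on)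

lemma Cinf_smooth_on:
  assumes "Cinf f"
  shows "smooth_on U f"
proof -
  have "Cinf ((deriv ^^ n) f)" for n
  proof (induction n)
    case 0
    then show ?case using assms by simp
  next
    case (Suc n)
    obtain f' where f': "\<forall>x. ((deriv ^^ n) f has_real_derivative f' x) (at x)" "Cinf f'"
      using Cinf_D[OF Suc] by blast
    then have "deriv ((deriv ^^ n) f) = f'" by (auto intro!: ext DERIV_imp_deriv)
    then show ?case using f'(2) by simp
  qed
  moreover have "g differentiable_on U" if "Cinf g" for g
    using Cinf_D[OF that]
    by (auto simp: differentiable_on_def real_differentiable_def intro: has_field_derivative_at_within)
  ultimately show ?thesis unfolding smooth_on_def by blast
qed

lemma Cinf_extends_smoothly:
  "Cinf g \<Longrightarrow> (\<And>t. 0 \<le> t \<Longrightarrow> g t = f t) \<Longrightarrow> extends_smoothly_nonneg f"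
  unfolding extends_smoothly_nonneg_def
  by (rule exI[of _ g], rule exI[of _ UNIV]) (auto intro: Cinf_smooth_on)

section \<open>The signed integral of a positive function and its inverse\<close>

definition signed_integral :: "(real \<Rightarrow> real) \<Rightarrow> real \<Rightarrow> real" where
  "signed_integral f v = integral {0..v} f - integral {v..0} f"

lemma signed_integral_0 [simp]: "signed_integral f 0 = 0"
  by (simp add: signed_integral_def)

text \<open>Fundamental theorem of calculus, on the whole line: locally around \<open>x\<close> the signed
  integral differs from \<open>v \<mapsto> \<integral>\<^sub>m\<^sup>v f\<close> by a constant.\<close>
lemma signed_integral_deriv:
  assumes f: "continuous_on UNIV f"
  shows "(signed_integral f has_real_derivative f x) (at x)"
proof -
  define m where "m = min x 0 - 1"
  define M where "M = max x 0 + 1"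
  have int: "f integrable_on {a..b}" for a b
    by (rule integrable_continuous_real) (rule continuous_on_subset[OF f], simp)
  have shift: "signed_integral f v = integral {m..v} f - integral {m..0} f"
    if "v \<in> {m<..<M}" for v
  proof (cases "0 \<le> v")
    case True
    have "integral {m..0} f + integral {0..v} f = integral {m..v} f"
      by (rule Henstock_Kurzweil_Integration.integral_combine) (use True m_def in \<open>auto intro: int\<close>)
    moreover have "integral {v..0} f = 0"
      using True by (cases "v = 0") auto
    ultimately show ?thesis unfolding signed_integral_def by simp
  next
    case False
    have "integral {m..v} f + integral {v..0} f = integral {m..0} f"
      by (rule Henstock_Kurzweil_Integration.integral_combine) (use False that m_def in \<open>auto intro: int\<close>)
    then show ?thesis using False unfolding signed_integral_def by simp
  qed
  have "((\<lambda>v. integral {m..v} f) has_real_derivative f x) (at x within {m..M})"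
    by (rule integral_has_real_derivative) (auto simp: m_def M_def intro: continuous_on_subset[OF f])
  moreover have "at x within {m..M} = at x"
    by (rule at_within_Icc_at) (auto simp: m_def M_def)
  ultimately have "((\<lambda>v. integral {m..v} f - integral {m..0} f) has_real_derivative f x) (at x)"
    by (auto intro!: derivative_eq_intros)
  then show ?thesis
    by (rule has_field_derivative_transform_within_open[where S="{m<..<M}"])
       (use shift m_def M_def in auto)
qed

context
  fixes f :: "real \<Rightarrow> real" and c :: real
  assumes f_cont: "continuous_on UNIV f" and c_pos: "0 < c" and f_ge: "\<And>x. c \<le> f x"
begin

lemma integrand_pos: "0 < f x"
  using f_ge[of x] c_pos by linarith

lemma signed_integral_less:
  assumes "x < y"
  shows "signed_integral f x < signed_integral f y"
  by (rule DERIV_pos_imp_increasing[OF assms]) (blast intro: signed_integral_deriv[OF f_cont] integrand_pos)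

lemma signed_integral_inj: "inj (signed_integral f)"
  by (rule strict_mono_imp_inj_on) (simp add: strict_mono_def signed_integral_less)

text \<open>\<open>v \<mapsto> \<integral>\<^sub>0\<^sup>v f - c v\<close> is nondecreasing, since its derivative is \<open>f - c \<ge> 0\<close>;
  this forces the signed integral to be unbounded in both directions.\<close>
lemma signed_integral_minus_linear_mono:
  assumes "a \<le> b"
  shows "signed_integral f a - c * a \<le> signed_integral f b - c * b"
proof (rule DERIV_nonneg_imp_nondecreasing[OF assms])
  fix x
  have "((\<lambda>v. signed_integral f v - c * v) has_real_derivative f x - c) (at x)"
    by (auto intro!: derivative_eq_intros signed_integral_deriv[OF f_cont])
  moreover have "0 \<le> f x - c" using f_ge[of x] by simp
  ultimately show "\<exists>y. ((\<lambda>v. signed_integral f v - c * v) has_real_derivative y) (at x) \<and> 0 \<le> y"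
    by blast
qed

lemma signed_integral_surj: "surj (signed_integral f)"
proof -
  have "\<exists>x. signed_integral f x = y" for y
  proof -
    define v where "v = \<bar>y\<bar> / c"
    have v: "0 \<le> v" "c * v = \<bar>y\<bar>" using c_pos by (auto simp: v_def)
    have "signed_integral f (- v) \<le> y"
      using signed_integral_minus_linear_mono[of "- v" 0] v by simp
    moreover have "y \<le> signed_integral f v"
      using signed_integral_minus_linear_mono[of 0 v] v by simp
    moreover have "\<forall>x. isCont (signed_integral f) x"
      using signed_integral_deriv[OF f_cont] DERIV_isCont by blast
    ultimately show ?thesis using IVT[of "signed_integral f" "- v" y v] v(1) by auto
  qed
  then show ?thesis by (metis surjI)
qed

lemma inv_signed_integral_deriv:
  "(inv (signed_integral f) has_real_derivative inverse (f (inv (signed_integral f) y))) (at y)"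
proof -
  let ?S = "signed_integral f" and ?G = "inv (signed_integral f)"
  have S_G: "?S (?G z) = z" for z by (rule surj_f_inv_f[OF signed_integral_surj])
  have G_S: "?G (?S x) = x" for x by (rule inv_f_f[OF signed_integral_inj])
  have cont: "isCont ?S x" for x using signed_integral_deriv[OF f_cont] DERIV_isCont by blast
  have "isCont ?G (?S (?G y))"
    by (rule isCont_inverse_function[where d=1, OF _ G_S cont]) simp
  then have "isCont ?G y" by (simp only: S_G)
  moreover have "f (?G y) \<noteq> 0" using integrand_pos[of "?G y"] by simp
  moreover have "(?S has_real_derivative f (?G y)) (at (?G y))"
    by (rule signed_integral_deriv[OF f_cont])
  ultimately show ?thesis
    by (intro DERIV_inverse_function[where a="y - 1" and b="y + 1"]) (simp_all, rule S_G)
qed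

lemma Cinf_inv_signed_integral:
  assumes "Cinf f"
  shows "Cinf (inv (signed_integral f))"
  by (rule Cinf_ode_inverse[OF assms _ inv_signed_integral_deriv])
     (use integrand_pos in \<open>simp add: less_imp_neq[symmetric]\<close>)

end

section \<open>The polynomial \<open>P\<close> and the integrand\<close>

locale alpha_param =
  fixes a :: real
  assumes a_nonneg: "0 \<le> a" and a_less_1: "a < 1"
begin

lemma a_powers: "a ^ 2 < 1" "a ^ 4 < 1"
  using a_nonneg a_less_1 by (simp_all add: power_less_one_iff)

text \<open>\<open>P(s) = (s - 1) Q(s)\<close> with \<open>Q\<close> positive on \<open>[1,\<infinity>)\<close>; this splits off the simple
  zero of \<open>P\<close> at the zero section \<open>r = 1\<close>.\<close>
definition Q :: "real \<Rightarrow> real" where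
  "Q s = (s + 1) * (s ^ 2 + 1) * (s ^ 4 + 1 - 2 * a ^ 4)"

lemma Pfun_factor: "Pfun a s = (s - 1) * Q s"
  unfolding Pfun_def Q_def by algebra

lemma quartic_pos: "1 \<le> s \<Longrightarrow> 0 < s ^ 4 - a ^ 4"
  using one_le_power[of s 4] a_powers by linarith

lemma square_minus_pos: "1 \<le> s \<Longrightarrow> 0 < s ^ 2 - a ^ 2"
  using one_le_power[of s 2] a_powers by linarith

lemma square_plus_pos: "0 < s \<Longrightarrow> 0 < s ^ 2 + a ^ 2"
  by (simp add: add_pos_nonneg)

lemma Q_pos: "1 \<le> s \<Longrightarrow> 0 < Q s"
proof -
  assume s: "1 \<le> s"
  have "0 < s ^ 4 + 1 - 2 * a ^ 4" using quartic_pos[OF s] a_powers by linarith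
  moreover have "0 < (s + 1) * (s ^ 2 + 1)" using s by (simp add: add_pos_nonneg)
  ultimately show ?thesis unfolding Q_def by simp
qed

lemma Pfun_pos: "1 < s \<Longrightarrow> 0 < Pfun a s"
  using Q_pos[of s] by (simp add: Pfun_factor)

lemma P_roots: "Pfun a 1 = 0 \<and> (\<forall>r>1. 0 < Pfun a r) \<and> (\<forall>r. Pfun a r = 0 \<longrightarrow> r \<le> 1)"
proof (intro conjI allI impI)
  show "Pfun a 1 = 0" by (simp add: Pfun_factor)
  show "0 < Pfun a r" if "1 < r" for r using Pfun_pos[OF that] .
  show "r \<le> 1" if "Pfun a r = 0" for r using Pfun_pos[of r] that by linarith
qed

text \<open>A crude upper bound on \<open>Q\<close>, giving the lower bound on \<open>H\<close> below.\<close>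
lemma Q_le:
  assumes s: "1 \<le> s"
  shows "Q s \<le> (4 * s ^ 2) ^ 2 * (s ^ 4 - a ^ 4)"
proof -
  have "s \<le> s ^ 2" using power_increasing[of 1 2 s] s by simp
  moreover have "1 \<le> s ^ 2" using s by (simp add: one_le_power)
  ultimately have "(s + 1) * (s ^ 2 + 1) \<le> (2 * s ^ 2) * (2 * s ^ 2)"
    using s by (intro mult_mono) simp_all
  moreover have "s ^ 4 + 1 - 2 * a ^ 4 \<le> 2 * (s ^ 4 - a ^ 4)"
    using s by (simp add: one_le_power)
  ultimately have "Q s \<le> ((2 * s ^ 2) * (2 * s ^ 2)) * (2 * (s ^ 4 - a ^ 4))"
    unfolding Q_def using quartic_pos[OF s] a_powers by (rule_tac mult_mono) auto
  also have "\<dots> = 8 * (s ^ 4 * (s ^ 4 - a ^ 4))"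
    by algebra
  also have "\<dots> \<le> 16 * (s ^ 4 * (s ^ 4 - a ^ 4))"
    using quartic_pos[OF s] by simp
  also have "\<dots> = (4 * s ^ 2) ^ 2 * (s ^ 4 - a ^ 4)"
    by algebra
  finally show ?thesis .
qed

text \<open>After the substitution \<open>s = 1 + v\<^sup>2\<close> the integrand of \<open>t(r)\<close>, times \<open>ds/dv\<close>, is
  the function \<open>H\<close>: smooth and bounded below by \<open>1/2\<close> on the whole line.\<close>
definition H :: "real \<Rightarrow> real" where
  "H v = 2 * (1 + v ^ 2) ^ 2 * sqrt ((1 + v ^ 2) ^ 4 - a ^ 4) / sqrt (Q (1 + v ^ 2))"

lemma H_ge: "1 / 2 \<le> H v"
proof -
  define s where "s = 1 + v ^ 2"
  have s: "1 \<le> s" by (simp add: s_def)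
  have "sqrt (Q s) \<le> sqrt ((4 * s ^ 2) ^ 2 * (s ^ 4 - a ^ 4))"
    by (rule real_sqrt_le_mono[OF Q_le[OF s]])
  also have "\<dots> = 4 * s ^ 2 * sqrt (s ^ 4 - a ^ 4)"
    by (simp only: real_sqrt_mult real_sqrt_abs) simp
  finally have "sqrt (Q s) \<le> 4 * s ^ 2 * sqrt (s ^ 4 - a ^ 4)" .
  moreover have "0 < sqrt (Q s)" using Q_pos[OF s] by simp
  ultimately show ?thesis
    unfolding H_def s_def[symmetric] by (simp add: field_simps)
qed

lemma Cinf_H: "Cinf H"
proof -
  have s: "Cinf (\<lambda>v. 1 + v ^ 2)" by (intro Cinf_add Cinf_const Cinf_power Cinf_id)
  have one_le: "1 \<le> 1 + v ^ 2" for v :: real by simp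
  have Q: "Cinf (\<lambda>v. Q (1 + v ^ 2))"
    unfolding Q_def by (intro Cinf_mult Cinf_add Cinf_diff Cinf_const Cinf_power s)
  show ?thesis unfolding H_def[abs_def]
    by (intro Cinf_divide Cinf_mult Cinf_const Cinf_power s Cinf_sqrt Cinf_diff Q)
       (use quartic_pos[OF one_le] Q_pos[OF one_le] in \<open>auto simp: less_le\<close>)
qed

lemma H_cont: "continuous_on S H"
  by (rule Cinf_continuous_on[OF Cinf_H])

section \<open>The time function and its inverse\<close>

text \<open>The time function in the variable \<open>v = \<surd>(r - 1)\<close>, its inverse, and \<open>r\<close> as a
  function of \<open>t\<close>.  All three are smooth on the whole line.\<close>
definition T :: "real \<Rightarrow> real" where "T = signed_integral H"
definition Ti :: "real \<Rightarrow> real" where "Ti = inv T"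
definition R :: "real \<Rightarrow> real" where "R t = 1 + Ti t ^ 2"

lemmas H_admissible = H_cont[of UNIV] half_gt_zero[OF zero_less_one] H_ge

lemma T_0: "T 0 = 0"
  by (simp add: T_def)

lemma T_less: "x < y \<Longrightarrow> T x < T y"
  unfolding T_def by (rule signed_integral_less[OF H_admissible])

lemma T_Ti: "T (Ti y) = y"
  unfolding Ti_def T_def by (rule surj_f_inv_f[OF signed_integral_surj[OF H_admissible]])

lemma Ti_T: "Ti (T x) = x"
  unfolding Ti_def T_def by (rule inv_f_f[OF signed_integral_inj[OF H_admissible]])

lemma Ti_deriv: "(Ti has_real_derivative inverse (H (Ti y))) (at y)"
  unfolding Ti_def T_def by (rule inv_signed_integral_deriv[OF H_admissible])

lemma Cinf_Ti: "Cinf Ti"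
  unfolding Ti_def T_def by (rule Cinf_inv_signed_integral[OF H_admissible Cinf_H])

lemma Ti_0: "Ti 0 = 0"
  using Ti_T[of 0] by (simp add: T_0)

lemma Ti_pos:
  assumes "0 < t"
  shows "0 < Ti t"
proof (rule ccontr)
  assume "\<not> 0 < Ti t"
  then have "T (Ti t) \<le> T 0" using T_less[of "Ti t" 0] by (cases "Ti t = 0") auto
  with assms show False by (simp add: T_Ti T_0)
qed

lemma Ti_nonneg: "0 \<le> t \<Longrightarrow> 0 \<le> Ti t"
  using Ti_pos Ti_0 by (cases "t = 0") (auto simp: less_imp_le)

lemma T_nonneg: "0 \<le> v \<Longrightarrow> 0 \<le> T v"
  using T_less[of 0 v] by (cases "v = 0") (auto simp: T_0)

lemma R_ge: "1 \<le> R t"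
  by (simp add: R_def)

lemma Cinf_R: "Cinf R"
  unfolding R_def[abs_def] by (intro Cinf_add Cinf_const Cinf_power Cinf_Ti)

text \<open>Substituting \<open>s = 1 + v\<^sup>2\<close> turns \<open>t(r)\<close> into \<open>T(\<surd>(r - 1))\<close>; away from \<open>s = 1\<close> the
  integrands agree, the factor \<open>\<surd>(s-1)\<close> of \<open>\<surd>P\<close> being cancelled by \<open>ds/dv = 2 v\<close>.\<close>
lemma integrand_substitution:
  assumes s: "1 < s"
  shows "s ^ 2 * sqrt (s ^ 4 - a ^ 4) / sqrt (Pfun a s)
           = (1 / (2 * sqrt (s - 1))) *\<^sub>R H (sqrt (s - 1))"
proof -
  have "H (sqrt (s - 1)) = 2 * s ^ 2 * sqrt (s ^ 4 - a ^ 4) / sqrt (Q s)"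
    using s by (simp add: H_def)
  moreover have "sqrt (Pfun a s) = sqrt (s - 1) * sqrt (Q s)"
    by (simp add: Pfun_factor real_sqrt_mult)
  moreover have "0 < sqrt (s - 1)" "0 < sqrt (Q s)"
    using s Q_pos[of s] by auto
  ultimately show ?thesis by (simp add: field_simps)
qed

lemma tfun_eq_T:
  assumes r: "1 \<le> r"
  shows "tfun a r = T (sqrt (r - 1))"
proof -
  let ?g = "\<lambda>s. sqrt (s - 1)" and ?g' = "\<lambda>s. 1 / (2 * sqrt (s - 1))"
  have "((\<lambda>s. ?g' s *\<^sub>R H (?g s)) has_integral
           (integral {?g 1..?g r} H - integral {?g r..?g 1} H)) {1..r}"
  proof (rule has_integral_substitution_general[where s="{1}" and c=0 and d="sqrt (r - 1)"])
    show "?g ` {1..r} \<subseteq> {0..sqrt (r - 1)}" by (auto simp: real_sqrt_le_mono)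
    show "continuous_on {1..r} ?g" by (intro continuous_intros)
    fix s assume "s \<in> {1..r} - {1}"
    then have "0 < s - 1" by auto
    moreover have "((\<lambda>s. s - 1) has_real_derivative 1) (at s)"
      using DERIV_diff[OF DERIV_ident DERIV_const[of 1]] by simp
    ultimately have "(?g has_real_derivative ?g' s) (at s)"
      using DERIV_sqrt_comp by blast
    then show "(?g has_field_derivative ?g' s) (at s within {1..r})"
      by (rule has_field_derivative_at_within)
  qed (use r H_cont in auto)
  then have "((\<lambda>s. ?g' s *\<^sub>R H (?g s)) has_integral T (sqrt (r - 1))) {1..r}"
    by (simp add: T_def signed_integral_def)
  then have "((\<lambda>s. s ^ 2 * sqrt (s ^ 4 - a ^ 4) / sqrt (Pfun a s)) has_integral
               T (sqrt (r - 1))) {1..r}"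
    by (rule has_integral_spike_finite[where S="{1}", rotated 2])
       (auto simp: integrand_substitution)
  then show ?thesis unfolding tfun_def by (rule integral_unique)
qed

lemma tfun_bij: "bij_betw (tfun a) {1..} {0..}"
proof -
  have "bij_betw (\<lambda>r. sqrt (r - 1)) {1..} {0..}"
    by (rule bij_betw_byWitness[where f'="\<lambda>v. 1 + v ^ 2"]) auto
  moreover have "bij_betw T {0..} {0..}"
    by (rule bij_betw_byWitness[where f'=Ti]) (auto simp: Ti_T T_Ti T_nonneg Ti_nonneg)
  ultimately have "bij_betw (T \<circ> (\<lambda>r. sqrt (r - 1))) {1..} {0..}"
    by (rule bij_betw_trans)
  then show ?thesis
    by (rule bij_betw_cong[THEN iffD1, rotated]) (simp add: tfun_eq_T)
qed

lemma rfun_eq_R: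
  assumes t: "0 \<le> t"
  shows "rfun a t = R t"
  unfolding rfun_def
proof (rule the_equality)
  show "1 \<le> R t \<and> tfun a (R t) = t"
    using R_ge tfun_eq_T[OF R_ge] Ti_nonneg[OF t] by (simp add: R_def T_Ti)
next
  fix r assume r: "1 \<le> r \<and> tfun a r = t"
  then have "sqrt (r - 1) = Ti t" using tfun_eq_T Ti_T by metis
  then have "Ti t ^ 2 = (sqrt (r - 1)) ^ 2" by simp
  also have "\<dots> = r - 1" using r by simp
  finally show "r = R t" by (simp add: R_def)
qed

section \<open>The system of ODEs for \<open>t > 0\<close>\<close>

text \<open>\<open>dr/dt\<close> as a function of \<open>r\<close>: the reciprocal of the integrand defining \<open>t(r)\<close>.\<close>
definition speed :: "real \<Rightarrow> real" where
  "speed r = sqrt (Pfun a r) / (r ^ 2 * sqrt (r ^ 4 - a ^ 4))"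

lemma R_deriv: "(R has_real_derivative 2 * Ti t * inverse (H (Ti t))) (at t)"
  unfolding R_def[abs_def] by (auto intro!: derivative_eq_intros Ti_deriv)

lemma R_deriv_eq_speed:
  assumes t: "0 < t"
  shows "2 * Ti t * inverse (H (Ti t)) = speed (R t)"
proof -
  define w where "w = Ti t"
  define r where "r = R t"
  have w: "0 < w" unfolding w_def using Ti_pos[OF t] .
  have r: "1 \<le> r" "1 + w ^ 2 = r" unfolding r_def w_def R_def by simp_all
  have "inverse (H w) = sqrt (Q r) / (2 * r ^ 2 * sqrt (r ^ 4 - a ^ 4))"
    unfolding H_def r(2) by simp
  moreover have "sqrt (Pfun a r) = w * sqrt (Q r)"
    using w by (simp add: Pfun_factor real_sqrt_mult flip: r(2))
  ultimately show ?thesis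
    unfolding speed_def w_def[symmetric] r_def[symmetric] by simp
qed

lemma comp_rfun_deriv:
  assumes t: "0 < t" and F: "(F has_real_derivative D) (at (rfun a t))"
  shows "((\<lambda>s. F (rfun a s)) has_real_derivative D * speed (rfun a t)) (at t)"
proof -
  have rt: "rfun a t = R t" by (rule rfun_eq_R) (use t in simp)
  have "((\<lambda>s. F (R s)) has_real_derivative D * speed (rfun a t)) (at t)"
    using DERIV_chain2[OF F[unfolded rt] R_deriv] by (simp add: R_deriv_eq_speed[OF t] rt)
  then show ?thesis
    by (rule has_field_derivative_transform_within_open[where S="{0<..}"])
       (use t rfun_eq_R in auto)
qed

lemma rfun_gt_1: "0 < t \<Longrightarrow> 1 < rfun a t"
  using Ti_pos[of t] by (simp add: rfun_eq_R R_def)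

lemma A1_profile_deriv:
  assumes r: "1 < r"
  defines "p \<equiv> sqrt (Pfun a r)" and "b \<equiv> sqrt (r ^ 4 - a ^ 4)"
  shows "((\<lambda>r. - sqrt (Pfun a r) / (r * sqrt (r ^ 4 - a ^ 4))) has_real_derivative
           p * (3 * r ^ 4 - a ^ 4) / (r ^ 2 * b ^ 3) - 4 * r ^ 2 * b / p) (at r)"
proof -
  have p: "0 < p" "p ^ 2 = Pfun a r" unfolding p_def using Pfun_pos[OF r] by simp_all
  have b: "0 < b" "b ^ 2 = r ^ 4 - a ^ 4" unfolding b_def using quartic_pos[of r] r by simp_all
  have "((\<lambda>r. Pfun a r) has_real_derivative 8 * r ^ 3 * b ^ 2) (at r)"
    unfolding Pfun_def b(2) by (auto intro!: derivative_eq_intros simp: algebra_simps)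
  from DERIV_sqrt_comp[OF this Pfun_pos[OF r]]
  have dp: "((\<lambda>r. sqrt (Pfun a r)) has_real_derivative 8 * r ^ 3 * b ^ 2 / (2 * p)) (at r)"
    unfolding p_def .
  have "((\<lambda>r. r ^ 4 - a ^ 4) has_real_derivative 4 * r ^ 3) (at r)"
    by (auto intro!: derivative_eq_intros)
  from DERIV_sqrt_comp[OF this quartic_pos] r
  have db: "((\<lambda>r. sqrt (r ^ 4 - a ^ 4)) has_real_derivative 4 * r ^ 3 / (2 * b)) (at r)"
    unfolding b_def by simp
  have "r * b \<noteq> 0" using r b by simp
  from DERIV_divide[OF DERIV_minus[OF dp] DERIV_mult[OF DERIV_ident db] this[unfolded b_def]]
  show ?thesis
    unfolding p_def[symmetric] b_def[symmetric]
    by (rule DERIV_cong) (use r p(1) b in \<open>simp add: field_simps, algebra\<close>)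
qed

lemma A_derivs:
  assumes t: "0 < t"
  defines "r \<equiv> rfun a t"
  defines "p \<equiv> sqrt (Pfun a r)" and "b \<equiv> sqrt (r ^ 4 - a ^ 4)"
  shows "(A1f a has_real_derivative p ^ 2 * (3 * r ^ 4 - a ^ 4) / (r ^ 4 * b ^ 4) - 4) (at t)"
    and "(A2f a has_real_derivative p / (r ^ 2 * b)) (at t)"
    and "(A3f a has_real_derivative - (p / (r ^ 2 * b))) (at t)"
    and "(Bf a has_real_derivative p / (r * b * sqrt (r ^ 2 + a ^ 2))) (at t)"
    and "(Cf a has_real_derivative p / (r * b * sqrt (r ^ 2 - a ^ 2))) (at t)"
proof -
  have r: "1 < r" unfolding r_def by (rule rfun_gt_1[OF t])
  have p: "0 < p" unfolding p_def using Pfun_pos[OF r] by simp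
  have b: "0 < b" unfolding b_def using quartic_pos[of r] r by simp
  have speed: "speed r = p / (r ^ 2 * b)" unfolding speed_def p_def b_def ..
  note chain = comp_rfun_deriv[OF t, unfolded r_def[symmetric] speed]
  have "((\<lambda>s. - sqrt (Pfun a (rfun a s)) / (rfun a s * sqrt (rfun a s ^ 4 - a ^ 4)))
          has_real_derivative
          (p * (3 * r ^ 4 - a ^ 4) / (r ^ 2 * b ^ 3) - 4 * r ^ 2 * b / p) * (p / (r ^ 2 * b))) (at t)"
    using chain[OF A1_profile_deriv[OF r]] unfolding p_def b_def .
  then show "(A1f a has_real_derivative p ^ 2 * (3 * r ^ 4 - a ^ 4) / (r ^ 4 * b ^ 4) - 4) (at t)"
    unfolding A1f_def[abs_def]
    by (rule DERIV_cong) (use r p b in \<open>simp add: field_simps, algebra\<close>)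
  show "(A2f a has_real_derivative p / (r ^ 2 * b)) (at t)"
    using chain[OF DERIV_ident] unfolding A2f_def[abs_def] by simp
  show "(A3f a has_real_derivative - (p / (r ^ 2 * b))) (at t)"
    using chain[OF DERIV_minus[OF DERIV_ident]] unfolding A3f_def[abs_def] by simp
  have "((\<lambda>r. r ^ 2 + a ^ 2) has_real_derivative 2 * r) (at r)"
    "((\<lambda>r. r ^ 2 - a ^ 2) has_real_derivative 2 * r) (at r)"
    by (auto intro!: derivative_eq_intros)
  from this[THEN DERIV_sqrt_comp] square_plus_pos[of r] square_minus_pos[of r] r
  have "((\<lambda>r. sqrt (r ^ 2 + a ^ 2)) has_real_derivative 2 * r / (2 * sqrt (r ^ 2 + a ^ 2))) (at r)"
    "((\<lambda>r. sqrt (r ^ 2 - a ^ 2)) has_real_derivative 2 * r / (2 * sqrt (r ^ 2 - a ^ 2))) (at r)"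
    by auto
  from this[THEN chain]
  show "(Bf a has_real_derivative p / (r * b * sqrt (r ^ 2 + a ^ 2))) (at t)"
    "(Cf a has_real_derivative p / (r * b * sqrt (r ^ 2 - a ^ 2))) (at t)"
    unfolding Bf_def[abs_def] Cf_def[abs_def]
    by (auto elim!: DERIV_cong simp: field_simps power2_eq_square)
qed

text \<open>With the derivatives above and the values \<open>A\<^sub>1 = -p/(r b)\<close>, \<open>A\<^sub>2 = -A\<^sub>3 = r\<close>,
  \<open>B\<^sup>2 = r\<^sup>2 + \<alpha>\<^sup>2\<close>, \<open>C\<^sup>2 = r\<^sup>2 - \<alpha>\<^sup>2\<close>, each equation becomes an identity between rational
  functions of \<open>r\<close>, \<open>p = \<surd>P(r)\<close> and \<open>b = \<surd>(r\<^sup>4 - \<alpha>\<^sup>4)\<close>.\<close>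
lemma ode:
  assumes t: "0 < t"
  shows
    "(A1f a has_real_derivative
        ((A2f a t - A3f a t)\<^sup>2 - (A1f a t)\<^sup>2) / (A2f a t * A3f a t)
        + (A1f a t)\<^sup>2 * ((Bf a t)\<^sup>2 + (Cf a t)\<^sup>2) / ((Bf a t)\<^sup>2 * (Cf a t)\<^sup>2)) (at t) \<and>
     (A2f a has_real_derivative
        ((A1f a t)\<^sup>2 - (A2f a t)\<^sup>2 + (A3f a t)\<^sup>2) / (A1f a t * A3f a t)
        - ((Bf a t)\<^sup>2 + (Cf a t)\<^sup>2 - 2 * (A2f a t)\<^sup>2) / (Bf a t * Cf a t)) (at t) \<and>
     (A3f a has_real_derivative
        ((A1f a t)\<^sup>2 + (A2f a t)\<^sup>2 - (A3f a t)\<^sup>2) / (A1f a t * A2f a t)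
        - ((Bf a t)\<^sup>2 + (Cf a t)\<^sup>2 - 2 * (A3f a t)\<^sup>2) / (Bf a t * Cf a t)) (at t) \<and>
     (Bf a has_real_derivative
        - (Cf a t * A1f a t + Bf a t * A2f a t + Bf a t * A3f a t) / (Bf a t * Cf a t)
        - ((Cf a t)\<^sup>2 - (Bf a t)\<^sup>2) * (A2f a t + A3f a t) / (2 * A2f a t * A3f a t * Cf a t))
        (at t) \<and>
     (Cf a has_real_derivative
        - (Bf a t * A1f a t + Cf a t * A2f a t + Cf a t * A3f a t) / (Bf a t * Cf a t)
        - ((Bf a t)\<^sup>2 - (Cf a t)\<^sup>2) * (A2f a t + A3f a t) / (2 * A2f a t * A3f a t * Bf a t))
        (at t)"
proof -
  define r where "r = rfun a t"
  define p where "p = sqrt (Pfun a r)"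
  define b where "b = sqrt (r ^ 4 - a ^ 4)"
  define B where "B = sqrt (r ^ 2 + a ^ 2)"
  define C where "C = sqrt (r ^ 2 - a ^ 2)"
  have r: "1 < r" unfolding r_def by (rule rfun_gt_1[OF t])
  have pos: "0 < p" "0 < b" "0 < B" "0 < C"
    unfolding p_def b_def B_def C_def
    using Pfun_pos[OF r] quartic_pos[of r] square_plus_pos[of r] square_minus_pos[of r] r
    by auto
  have squares: "b ^ 2 = r ^ 4 - a ^ 4" "B ^ 2 = r ^ 2 + a ^ 2" "C ^ 2 = r ^ 2 - a ^ 2"
    unfolding b_def B_def C_def
    using quartic_pos[of r] square_plus_pos[of r] square_minus_pos[of r] r by auto
  have at_t: "A1f a t = - p / (r * b)" "A2f a t = r" "A3f a t = - r"
      "Bf a t = B" "Cf a t = C"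
    by (simp_all add: A1f_def A2f_def A3f_def Bf_def Cf_def r_def p_def b_def B_def C_def)
  note derivs = A_derivs[OF t, folded r_def, folded p_def b_def B_def C_def]
  show ?thesis
    unfolding at_t
  proof (intro conjI)
    show "(A1f a has_real_derivative ((r - - r)\<^sup>2 - (- p / (r * b))\<^sup>2) / (r * - r)
        + (- p / (r * b))\<^sup>2 * (B\<^sup>2 + C\<^sup>2) / (B\<^sup>2 * C\<^sup>2)) (at t)"
    proof (rule DERIV_cong[OF derivs(1)])
      have "B\<^sup>2 * C\<^sup>2 = b\<^sup>2" "B\<^sup>2 + C\<^sup>2 = 2 * r\<^sup>2"
        unfolding squares by algebra+
      then show "p\<^sup>2 * (3 * r ^ 4 - a ^ 4) / (r ^ 4 * b ^ 4) - 4 =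
        ((r - - r)\<^sup>2 - (- p / (r * b))\<^sup>2) / (r * - r)
        + (- p / (r * b))\<^sup>2 * (B\<^sup>2 + C\<^sup>2) / (B\<^sup>2 * C\<^sup>2)"
        using r pos squares(1) by (simp add: field_simps) algebra
    qed
    show "(A2f a has_real_derivative ((- p / (r * b))\<^sup>2 - r\<^sup>2 + (- r)\<^sup>2) / (- p / (r * b) * - r)
        - (B\<^sup>2 + C\<^sup>2 - 2 * r\<^sup>2) / (B * C)) (at t)"
      using derivs(2) by (rule DERIV_cong) (use r pos squares in \<open>simp add: field_simps power2_eq_square\<close>)
    show "(A3f a has_real_derivative ((- p / (r * b))\<^sup>2 + r\<^sup>2 - (- r)\<^sup>2) / (- p / (r * b) * r)
        - (B\<^sup>2 + C\<^sup>2 - 2 * (- r)\<^sup>2) / (B * C)) (at t)"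
      using derivs(3) by (rule DERIV_cong) (use r pos squares in \<open>simp add: field_simps power2_eq_square\<close>)
    show "(Bf a has_real_derivative - (C * (- p / (r * b)) + B * r + B * - r) / (B * C)
        - (C\<^sup>2 - B\<^sup>2) * (r + - r) / (2 * r * - r * C)) (at t)"
      using derivs(4) by (rule DERIV_cong) (use r pos in \<open>simp add: field_simps\<close>)
    show "(Cf a has_real_derivative - (B * (- p / (r * b)) + C * r + C * - r) / (B * C)
        - (B\<^sup>2 - C\<^sup>2) * (r + - r) / (2 * r * - r * B)) (at t)"
      using derivs(5) by (rule DERIV_cong) (use r pos in \<open>simp add: field_simps\<close>)
  qed
qed

section \<open>Behaviour at the zero section \<open>t = 0\<close>\<close>

text \<open>Since \<open>\<surd>P(r) = v \<surd>Q(r)\<close> with \<open>v = Ti t\<close>, we get \<open>A\<^sub>1 = -Ti \<cdot> K(R)\<close> for \<open>t \<ge> 0\<close>,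
  which is smooth on the whole line.\<close>
definition K :: "real \<Rightarrow> real" where
  "K r = sqrt (Q r) / (r * sqrt (r ^ 4 - a ^ 4))"

lemma K_pos: "1 \<le> r \<Longrightarrow> 0 < K r"
  unfolding K_def using Q_pos quartic_pos by (intro divide_pos_pos mult_pos_pos) auto

lemma Cinf_K_R: "Cinf (\<lambda>t. K (R t))"
proof -
  have Q: "Cinf (\<lambda>t. Q (R t))"
    unfolding Q_def by (intro Cinf_mult Cinf_add Cinf_diff Cinf_const Cinf_power Cinf_R)
  have "R t * sqrt (R t ^ 4 - a ^ 4) \<noteq> 0" for t
    using quartic_pos[OF R_ge[of t]] R_ge[of t] by simp
  then show ?thesis
    unfolding K_def using Q_pos[OF R_ge] quartic_pos[OF R_ge]
    by (intro Cinf_divide Cinf_sqrt Cinf_mult Q Cinf_diff Cinf_power Cinf_const Cinf_R) auto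
qed

lemma A1f_eq: "0 \<le> t \<Longrightarrow> A1f a t = - (Ti t * K (R t))"
proof -
  assume t: "0 \<le> t"
  have "Pfun a (R t) = Ti t ^ 2 * Q (R t)" by (simp add: Pfun_factor R_def)
  then have "sqrt (Pfun a (R t)) = Ti t * sqrt (Q (R t))"
    using Ti_nonneg[OF t] by (simp add: real_sqrt_mult)
  then show ?thesis by (simp add: A1f_def K_def rfun_eq_R[OF t])
qed

lemma A2f_eq: "0 \<le> t \<Longrightarrow> A2f a t = R t"
  by (simp add: A2f_def rfun_eq_R)

lemma A3f_eq: "0 \<le> t \<Longrightarrow> A3f a t = - R t"
  by (simp add: A3f_def rfun_eq_R)

lemma Bf_eq: "0 \<le> t \<Longrightarrow> Bf a t = sqrt (R t ^ 2 + a ^ 2)"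
  by (simp add: Bf_def rfun_eq_R)

lemma Cf_eq: "0 \<le> t \<Longrightarrow> Cf a t = sqrt (R t ^ 2 - a ^ 2)"
  by (simp add: Cf_def rfun_eq_R)

lemma smooth_extensions:
  "extends_smoothly_nonneg (A1f a) \<and> extends_smoothly_nonneg (A2f a) \<and>
   extends_smoothly_nonneg (A3f a) \<and> extends_smoothly_nonneg (Bf a) \<and>
   extends_smoothly_nonneg (Cf a)"
proof (intro conjI)
  have "Cinf (\<lambda>t. - (Ti t * K (R t)))" by (intro Cinf_minus Cinf_mult Cinf_Ti Cinf_K_R)
  then show "extends_smoothly_nonneg (A1f a)" by (rule Cinf_extends_smoothly) (simp add: A1f_eq)
  show "extends_smoothly_nonneg (A2f a)" by (rule Cinf_extends_smoothly[OF Cinf_R]) (simp add: A2f_eq)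
  show "extends_smoothly_nonneg (A3f a)"
    by (rule Cinf_extends_smoothly[OF Cinf_minus[OF Cinf_R]]) (simp add: A3f_eq)
  have R_pos: "0 < R t" for t using R_ge[of t] by linarith
  have "Cinf (\<lambda>t. sqrt (R t ^ 2 + a ^ 2))"
    by (intro Cinf_sqrt Cinf_add Cinf_power Cinf_const Cinf_R square_plus_pos R_pos)
  then show "extends_smoothly_nonneg (Bf a)" by (rule Cinf_extends_smoothly) (simp add: Bf_eq)
  have "Cinf (\<lambda>t. sqrt (R t ^ 2 - a ^ 2))"
    by (intro Cinf_sqrt Cinf_diff Cinf_power Cinf_const Cinf_R square_minus_pos R_ge)
  then show "extends_smoothly_nonneg (Cf a)" by (rule Cinf_extends_smoothly) (simp add: Cf_eq)
qed

lemma R_0: "R 0 = 1"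
  by (simp add: R_def Ti_0)

text \<open>\<open>r = 1 + v\<^sup>2\<close> is stationary at \<open>t = 0\<close>, which gives \<open>A\<^sub>2'(0) = A\<^sub>3'(0) = B'(0) = C'(0) = 0\<close>.\<close>
lemma R_deriv_0: "(R has_real_derivative 0) (at 0)"
  using R_deriv[of 0] by (simp add: Ti_0)

text \<open>The normalisation \<open>|A\<^sub>1'(0)| = 4\<close>: \<open>A\<^sub>1'(0) = -Ti'(0) K(1) = - K(1) / H(0)\<close>.\<close>
lemma K_1_div_H_0: "K 1 / H 0 = 4"
proof -
  have "Q 1 = 8 * (1 - a ^ 4)" by (simp add: Q_def)
  moreover have "0 < 1 - a ^ 4" using a_powers by simp
  ultimately show ?thesis by (simp add: K_def H_def field_simps real_sqrt_mult)
qed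

lemma A1_ext_deriv_0: "((\<lambda>t. - (Ti t * K (R t))) has_real_derivative - 4) (at 0)"
proof -
  obtain k' where "((\<lambda>t. K (R t)) has_real_derivative k') (at 0)"
    using Cinf_D[OF Cinf_K_R] by blast
  from DERIV_minus[OF DERIV_mult[OF Ti_deriv[of 0] this]]
  show ?thesis using K_1_div_H_0 by (simp add: Ti_0 R_0 divide_inverse mult.commute)
qed

lemma initial_conditions:
  "A1f a 0 = 0 \<and> (\<exists>d. (A1f a has_real_derivative d) (at 0 within {0..}) \<and> \<bar>d\<bar> = 4) \<and>
   A2f a 0 = - A3f a 0 \<and> A2f a 0 \<noteq> 0 \<and>
   (\<exists>d. (A2f a has_real_derivative d) (at 0 within {0..}) \<and>
        (A3f a has_real_derivative d) (at 0 within {0..})) \<and>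
   Bf a 0 \<noteq> 0 \<and> (Bf a has_real_derivative 0) (at 0 within {0..}) \<and>
   Cf a 0 \<noteq> 0 \<and> (Cf a has_real_derivative 0) (at 0 within {0..})"
proof (intro conjI)
  show "A1f a 0 = 0" by (simp add: A1f_eq Ti_0)
  show "\<exists>d. (A1f a has_real_derivative d) (at 0 within {0..}) \<and> \<bar>d\<bar> = 4"
  proof (intro exI conjI)
    show "(A1f a has_real_derivative - 4) (at 0 within {0..})"
      by (rule DERIV_within_nonneg_transfer[OF A1_ext_deriv_0]) (simp add: A1f_eq)
  qed simp
  show "A2f a 0 = - A3f a 0" by (simp add: A2f_def A3f_def)
  show "A2f a 0 \<noteq> 0" by (simp add: A2f_eq R_0)
  show "\<exists>d. (A2f a has_real_derivative d) (at 0 within {0..}) \<and>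
           (A3f a has_real_derivative d) (at 0 within {0..})"
    using DERIV_within_nonneg_transfer[OF R_deriv_0, of "A2f a"]
      DERIV_within_nonneg_transfer[OF DERIV_minus[OF R_deriv_0], of "A3f a"]
    by (auto simp: A2f_eq A3f_eq)
  show "Bf a 0 \<noteq> 0" using square_plus_pos[of 1] by (simp add: Bf_eq R_0)
  show "Cf a 0 \<noteq> 0" using square_minus_pos[of 1] by (simp add: Cf_eq R_0)
  have "((\<lambda>r. r ^ 2 + a ^ 2) has_real_derivative 2 * R 0) (at (R 0))"
    "((\<lambda>r. r ^ 2 - a ^ 2) has_real_derivative 2 * R 0) (at (R 0))"
    by (auto intro!: derivative_eq_intros)
  from DERIV_sqrt_comp[OF this(1)] DERIV_sqrt_comp[OF this(2)]
  have "((\<lambda>r. sqrt (r ^ 2 + a ^ 2)) has_real_derivative 1 / sqrt (1 + a ^ 2)) (at (R 0))"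
    "((\<lambda>r. sqrt (r ^ 2 - a ^ 2)) has_real_derivative 1 / sqrt (1 - a ^ 2)) (at (R 0))"
    using square_plus_pos[of 1] square_minus_pos[of 1] by (simp_all add: R_0)
  from DERIV_chain2[OF this(1) R_deriv_0] DERIV_chain2[OF this(2) R_deriv_0]
  show "(Bf a has_real_derivative 0) (at 0 within {0..})"
    "(Cf a has_real_derivative 0) (at 0 within {0..})"
    by (simp_all add: DERIV_within_nonneg_transfer Bf_eq Cf_eq)
qed

lemma constant_signs:
  "const_sign_pos (A1f a) \<and> const_sign_pos (A2f a) \<and> const_sign_pos (A3f a) \<and>
   const_sign_pos (Bf a) \<and> const_sign_pos (Cf a)"
proof -
  have R_pos: "0 < R t" for t using R_ge[of t] by linarith
  have "A1f a t < 0" if "0 < t" for t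
    using mult_pos_pos[OF Ti_pos[OF that] K_pos[OF R_ge]] that by (simp add: A1f_eq)
  moreover have "0 < A2f a t" "A3f a t < 0" "0 < Bf a t" "0 < Cf a t" if "0 < t" for t
    using that R_pos[of t] square_plus_pos[OF R_pos] square_minus_pos[OF R_ge]
    by (simp_all add: A2f_eq A3f_eq Bf_eq Cf_eq)
  ultimately show ?thesis unfolding const_sign_pos_def by blast
qed

end

theorem mainTheorem4:
  fixes \<alpha> :: real
  assumes "0 \<le> \<alpha>" and "\<alpha> < 1"
  shows
   "Pfun \<alpha> 1 = 0 \<and> (\<forall>r>1. Pfun \<alpha> r > 0) \<and> (\<forall>r. Pfun \<alpha> r = 0 \<longrightarrow> r \<le> 1) \<and> 1 > \<alpha> \<and>
    bij_betw (tfun \<alpha>) {1..} {0..} \<and>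
    (let A1 = A1f \<alpha>; A2 = A2f \<alpha>; A3 = A3f \<alpha>; B = Bf \<alpha>; C = Cf \<alpha> in
      (\<forall>t>0.
         (A1 has_real_derivative
            ((A2 t - A3 t)\<^sup>2 - (A1 t)\<^sup>2) / (A2 t * A3 t)
            + (A1 t)\<^sup>2 * ((B t)\<^sup>2 + (C t)\<^sup>2) / ((B t)\<^sup>2 * (C t)\<^sup>2)) (at t) \<and>
         (A2 has_real_derivative
            ((A1 t)\<^sup>2 - (A2 t)\<^sup>2 + (A3 t)\<^sup>2) / (A1 t * A3 t)
            - ((B t)\<^sup>2 + (C t)\<^sup>2 - 2 * (A2 t)\<^sup>2) / (B t * C t)) (at t) \<and>
         (A3 has_real_derivative
            ((A1 t)\<^sup>2 + (A2 t)\<^sup>2 - (A3 t)\<^sup>2) / (A1 t * A2 t)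
            - ((B t)\<^sup>2 + (C t)\<^sup>2 - 2 * (A3 t)\<^sup>2) / (B t * C t)) (at t) \<and>
         (B has_real_derivative
            - (C t * A1 t + B t * A2 t + B t * A3 t) / (B t * C t)
            - ((C t)\<^sup>2 - (B t)\<^sup>2) * (A2 t + A3 t) / (2 * A2 t * A3 t * C t)) (at t) \<and>
         (C has_real_derivative
            - (B t * A1 t + C t * A2 t + C t * A3 t) / (B t * C t)
            - ((B t)\<^sup>2 - (C t)\<^sup>2) * (A2 t + A3 t) / (2 * A2 t * A3 t * B t)) (at t)) \<and>
      extends_smoothly_nonneg A1 \<and> extends_smoothly_nonneg A2 \<and> extends_smoothly_nonneg A3 \<and>
      extends_smoothly_nonneg B \<and> extends_smoothly_nonneg C \<and>
      A1 0 = 0 \<and> (\<exists>d. (A1 has_real_derivative d) (at 0 within {0..}) \<and> \<bar>d\<bar> = 4) \<and>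
      A2 0 = - A3 0 \<and> A2 0 \<noteq> 0 \<and>
      (\<exists>d. (A2 has_real_derivative d) (at 0 within {0..}) \<and>
           (A3 has_real_derivative d) (at 0 within {0..})) \<and>
      B 0 \<noteq> 0 \<and> (B has_real_derivative 0) (at 0 within {0..}) \<and>
      C 0 \<noteq> 0 \<and> (C has_real_derivative 0) (at 0 within {0..}) \<and>
      const_sign_pos A1 \<and> const_sign_pos A2 \<and> const_sign_pos A3 \<and>
      const_sign_pos B \<and> const_sign_pos C)"
proof -
  interpret alpha_param \<alpha> using assms by unfold_locales
  show ?thesis
    unfolding Let_def
    using P_roots assms(2) tfun_bij ode smooth_extensions initial_conditions constant_signs
    by blast
qed

end
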